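(* Let $f:\mathbb F_2^5\to\mathbb F_2$ be $f(x_1,\dots,x_5)=x_1\oplus x_5\oplus x_3(x_2\oplus x_4\oplus x_5)$. Let $r,m$ be even, $n=r+m$, let $a,h_1,h_2:\mathbb F_2^r\to\mathbb F_2$ and $g_1,g_2:\mathbb F_2^m\to\mathbb F_2$, and define $\mathfrak f(x,y)=f(a(x),h_1(x),h_2(x),g_1(y),g_2(y))$ for $(x,y)\in\mathbb F_2^r\times\mathbb F_2^m$. (i) If the four functions $a\oplus c_1h_1\oplus c_2h_2$, $(c_1,c_2)\in\mathbb F_2^2$, are all bent and $g_1,g_2$ are bent, then $W_{\mathfrak f}(u,v)\in\{0,\pm2^{n/2},\pm2^{(n+2)/2}\}$ for all $(u,v)$. (ii) Let $r\ge6$. If $a$ is $4$-plateaued, $a\oplus c_1h_1\oplus c_2h_2$ is $2$-plateaued for every $(c_1,c_2)\ne(0,0)$, the four functions $a\oplus c_1h_1\oplus c_2h_2$, $(c_1,c_2)\in\mathbb F_2^2$, have pairwise disjoint Walsh supports, and $g_1,g_2$ are bent, then $W_{\mathfrak f}(u,v)\in\{0,\pm2^{n/2},\pm2^{(n+2)/2}\}$ for all $(u,v)$.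
   Context: $W_h(\omega)=\sum_x(-1)^{h(x)\oplus\omega\cdot x}$, Walsh support $S_h=\{\omega:W_h(\omega)\ne0\}$. For even $m$, $g$ is bent if $|W_g(\omega)|=2^{m/2}$ for all $\omega$. A function $h$ on $\mathbb F_2^r$ is $s$-plateaued if $W_h(\omega)\in\{0,\pm2^{(r+s)/2}\}$ for all $\omega$. *)

theory Defs
  imports Main
begin

text \<open>Vectors of F_2^r are boolean lists of length r; XOR is (\<noteq>) on bool.\<close>

definition vecs :: "nat \<Rightarrow> bool list set" where
  "vecs r = {xs. length xs = r}"

definition dotp :: "bool list \<Rightarrow> bool list \<Rightarrow> bool" where
  "dotp w x = odd (length (filter id (map2 (\<and>) w x)))"

definition walsh :: "nat \<Rightarrow> (bool list \<Rightarrow> bool) \<Rightarrow> bool list \<Rightarrow> int" where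
  "walsh r h w = (\<Sum>x\<in>vecs r. (if h x \<noteq> dotp w x then -1 else 1))"

definition walsh_support :: "nat \<Rightarrow> (bool list \<Rightarrow> bool) \<Rightarrow> bool list set" where
  "walsh_support r h = {w \<in> vecs r. walsh r h w \<noteq> 0}"

definition bent :: "nat \<Rightarrow> (bool list \<Rightarrow> bool) \<Rightarrow> bool" where
  "bent m g = (\<forall>w\<in>vecs m. \<bar>walsh m g w\<bar> = 2 ^ (m div 2))"

definition plateaued :: "nat \<Rightarrow> nat \<Rightarrow> (bool list \<Rightarrow> bool) \<Rightarrow> bool" where
  "plateaued r s h = (\<forall>w\<in>vecs r. walsh r h w \<in> {0, 2 ^ ((r + s) div 2), - (2 ^ ((r + s) div 2))})"

definition f5 :: "bool \<Rightarrow> bool \<Rightarrow> bool \<Rightarrow> bool \<Rightarrow> bool \<Rightarrow> bool" where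
  "f5 x1 x2 x3 x4 x5 = ((x1 \<noteq> x5) \<noteq> (x3 \<and> ((x2 \<noteq> x4) \<noteq> x5)))"

definition lincomb :: "(bool list \<Rightarrow> bool) \<Rightarrow> (bool list \<Rightarrow> bool) \<Rightarrow> (bool list \<Rightarrow> bool)
    \<Rightarrow> bool \<Rightarrow> bool \<Rightarrow> bool list \<Rightarrow> bool" where
  "lincomb a h1 h2 c1 c2 x = ((a x \<noteq> (c1 \<and> h1 x)) \<noteq> (c2 \<and> h2 x))"

text \<open>The function on F_2^r x F_2^m, identified with F_2^(r+m) by concatenation (x,y) = x @ y.\<close>
definition frakf :: "nat \<Rightarrow> (bool list \<Rightarrow> bool) \<Rightarrow> (bool list \<Rightarrow> bool) \<Rightarrow> (bool list \<Rightarrow> bool)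
    \<Rightarrow> (bool list \<Rightarrow> bool) \<Rightarrow> (bool list \<Rightarrow> bool) \<Rightarrow> bool list \<Rightarrow> bool" where
  "frakf r a h1 h2 g1 g2 z =
     f5 (a (take r z)) (h1 (take r z)) (h2 (take r z)) (g1 (drop r z)) (g2 (drop r z))"

definition three_valued :: "nat \<Rightarrow> int \<Rightarrow> bool" where
  "three_valued n v = (v \<in> {0, 2 ^ (n div 2), - (2 ^ (n div 2)),
                              2 ^ ((n + 2) div 2), - (2 ^ ((n + 2) div 2))})"

end

theory Submission
  imports Defs
begin

text \<open>Write chi(b) = (-1)^b. The function f depends on x3 only through a choice between
  x1 + x5 and x1 + x2 + x4, whence
  2 chi(f) = chi(x1+x5) + chi(x1+x3+x5) + chi(x1+x2+x4) - chi(x1+x2+x3+x4).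
  Substituting a, h1, h2, g1, g2 and summing over F_2^r x F_2^m gives
  2 W(u,v) = (W_a(u) + W_{a+h2}(u)) W_{g2}(v) + (W_{a+h1}(u) - W_{a+h1+h2}(u)) W_{g1}(v).
  With R = 2^(r/2) and M = 2^(m/2) the bent factors are +-M. In case (i) both brackets lie in
  {0, +-2R}; in case (ii) disjointness of the Walsh supports leaves at most one nonzero value
  among the four, of size 4R or 2R. Either way W(u,v) lies in {0, +-RM, +-2RM}.\<close>

definition bool_sign :: "bool \<Rightarrow> int" where
  "bool_sign b = (if b then -1 else 1)"

lemma walsh_eq_sum_bool_sign: "walsh r h w = (\<Sum>x\<in>vecs r. bool_sign (h x \<noteq> dotp w x))"
  by (simp add: walsh_def bool_sign_def)

lemma lincomb_False_False [simp]: "lincomb a h1 h2 False False = a"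
  by (simp add: lincomb_def fun_eq_iff)

lemma bool_sign_f5_expansion:
  "2 * bool_sign (f5 p1 p2 p3 p4 p5 \<noteq> (d1 \<noteq> d2)) =
     bool_sign (p1 \<noteq> d1) * bool_sign (p5 \<noteq> d2)
   + bool_sign ((p1 \<noteq> p3) \<noteq> d1) * bool_sign (p5 \<noteq> d2)
   + bool_sign ((p1 \<noteq> p2) \<noteq> d1) * bool_sign (p4 \<noteq> d2)
   - bool_sign (((p1 \<noteq> p2) \<noteq> p3) \<noteq> d1) * bool_sign (p4 \<noteq> d2)"
  by (cases p1; cases p2; cases p3; cases p4; cases p5; cases d1; cases d2)
     (simp_all add: f5_def bool_sign_def)

lemma bij_betw_append_vecs: "bij_betw (\<lambda>(x, y). x @ y) (vecs r \<times> vecs m) (vecs (r + m))"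
  by (rule bij_betw_byWitness[where f' = "\<lambda>z. (take r z, drop r z)"]) (auto simp: vecs_def)

lemma sum_vecs_add: "(\<Sum>z\<in>vecs (r + m). F z) = (\<Sum>x\<in>vecs r. \<Sum>y\<in>vecs m. F (x @ y))"
proof -
  have "(\<Sum>z\<in>vecs (r + m). F z) = (\<Sum>p\<in>vecs r \<times> vecs m. F ((\<lambda>(x, y). x @ y) p))"
    by (rule sum.reindex_bij_betw[OF bij_betw_append_vecs, symmetric])
  also have "\<dots> = (\<Sum>x\<in>vecs r. \<Sum>y\<in>vecs m. F (x @ y))"
    by (simp add: sum.cartesian_product split_def)
  finally show ?thesis .
qed

lemma dotp_append: "length u = length x \<Longrightarrow> dotp (u @ v) (x @ y) = (dotp u x \<noteq> dotp v y)"
  by (simp add: dotp_def zip_append)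

lemma walsh_frakf_decomposition:
  assumes u: "u \<in> vecs r"
  shows "2 * walsh (r + m) (frakf r a h1 h2 g1 g2) (u @ v) =
       (walsh r a u + walsh r (lincomb a h1 h2 False True) u) * walsh m g2 v
     + (walsh r (lincomb a h1 h2 True False) u - walsh r (lincomb a h1 h2 True True) u) * walsh m g1 v"
    (is "_ = ?rhs")
proof -
  let ?\<chi> = bool_sign
  have pointwise: "2 * ?\<chi> (frakf r a h1 h2 g1 g2 (x @ y) \<noteq> dotp (u @ v) (x @ y)) =
      ?\<chi> (a x \<noteq> dotp u x) * ?\<chi> (g2 y \<noteq> dotp v y)
    + ?\<chi> ((a x \<noteq> h2 x) \<noteq> dotp u x) * ?\<chi> (g2 y \<noteq> dotp v y)
    + ?\<chi> ((a x \<noteq> h1 x) \<noteq> dotp u x) * ?\<chi> (g1 y \<noteq> dotp v y)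
    - ?\<chi> (((a x \<noteq> h1 x) \<noteq> h2 x) \<noteq> dotp u x) * ?\<chi> (g1 y \<noteq> dotp v y)"
    if "x \<in> vecs r" for x y
  proof -
    have split: "take r (x @ y) = x" "drop r (x @ y) = y"
      using that by (auto simp: vecs_def)
    have "dotp (u @ v) (x @ y) = (dotp u x \<noteq> dotp v y)"
      using that u by (simp add: vecs_def dotp_append)
    then show ?thesis
      unfolding frakf_def split by (simp only: bool_sign_f5_expansion)
  qed
  have "2 * walsh (r + m) (frakf r a h1 h2 g1 g2) (u @ v) =
      (\<Sum>x\<in>vecs r. \<Sum>y\<in>vecs m. 2 * ?\<chi> (frakf r a h1 h2 g1 g2 (x @ y) \<noteq> dotp (u @ v) (x @ y)))"
    by (simp add: walsh_eq_sum_bool_sign sum_vecs_add sum_distrib_left)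
  also have "\<dots> = (\<Sum>x\<in>vecs r. \<Sum>y\<in>vecs m.
      ?\<chi> (a x \<noteq> dotp u x) * ?\<chi> (g2 y \<noteq> dotp v y)
    + ?\<chi> ((a x \<noteq> h2 x) \<noteq> dotp u x) * ?\<chi> (g2 y \<noteq> dotp v y)
    + ?\<chi> ((a x \<noteq> h1 x) \<noteq> dotp u x) * ?\<chi> (g1 y \<noteq> dotp v y)
    - ?\<chi> (((a x \<noteq> h1 x) \<noteq> h2 x) \<noteq> dotp u x) * ?\<chi> (g1 y \<noteq> dotp v y))"
    by (intro sum.cong refl pointwise)
  also have "\<dots> = walsh r a u * walsh m g2 v + walsh r (lincomb a h1 h2 False True) u * walsh m g2 v
    + walsh r (lincomb a h1 h2 True False) u * walsh m g1 v
    - walsh r (lincomb a h1 h2 True True) u * walsh m g1 v"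
    by (simp add: sum.distrib sum_subtractf sum_product walsh_eq_sum_bool_sign lincomb_def)
  also have "\<dots> = ?rhs"
    by (simp add: algebra_simps)
  finally show ?thesis .
qed

lemma bent_walsh_values:
  assumes "bent m g" "w \<in> vecs m"
  shows "walsh m g w \<in> {2 ^ (m div 2), - (2 ^ (m div 2))}"
proof -
  have "\<bar>walsh m g w\<bar> = 2 ^ (m div 2)"
    using assms unfolding bent_def by blast
  then show ?thesis by (auto simp: abs_if split: if_splits)
qed

lemma plateaued_walsh_values:
  assumes "plateaued r s h" "w \<in> vecs r" "even s"
  shows "walsh r h w \<in> {0, 2 ^ (s div 2) * 2 ^ (r div 2), - (2 ^ (s div 2) * 2 ^ (r div 2))}"
proof -
  have "(r + s) div 2 = s div 2 + r div 2"
    using \<open>even s\<close> by auto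
  then show ?thesis
    using assms(1,2) unfolding plateaued_def by (simp add: power_add)
qed

lemma walsh_zero_if_supports_disjoint:
  assumes "walsh_support r h \<inter> walsh_support r k = {}" "w \<in> vecs r"
  shows "walsh r h w = 0 \<or> walsh r k w = 0"
  using assms unfolding walsh_support_def by blast

lemma three_valued_add:
  assumes "even r" "W \<in> {0, R * M, - (R * M), 2 * (R * M), - (2 * (R * M))}"
    and "R = 2 ^ (r div 2)" "M = 2 ^ (m div 2)"
  shows "three_valued (r + m) W"
proof -
  have "(r + m) div 2 = r div 2 + m div 2" "(r + m + 2) div 2 = Suc (r div 2 + m div 2)"
    using \<open>even r\<close> by auto
  then show ?thesis
    using assms(2-) unfolding three_valued_def by (simp add: power_add)
qed

lemma half_sum_products_values:
  fixes A B P Q R M W :: int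
  assumes "A \<in> {0, 2 * R, - (2 * R)}" "B \<in> {0, 2 * R, - (2 * R)}"
    and "P \<in> {M, - M}" "Q \<in> {M, - M}" "2 * W = A * Q + B * P"
  shows "W \<in> {0, R * M, - (R * M), 2 * (R * M), - (2 * (R * M))}"
  using assms by (auto simp: algebra_simps)

lemma half_sum_products_values_disjoint:
  fixes A B P Q R M W :: int
  assumes "A \<in> {0, 2 * R, - (2 * R), 4 * R, - (4 * R)}" "B \<in> {0, 2 * R, - (2 * R), 4 * R, - (4 * R)}"
    and "A = 0 \<or> B = 0" "P \<in> {M, - M}" "Q \<in> {M, - M}" "2 * W = A * Q + B * P"
  shows "W \<in> {0, R * M, - (R * M), 2 * (R * M), - (2 * (R * M))}"
  using assms by (auto simp: algebra_simps)

lemma walsh_frakf_three_valued_bent: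
  assumes "even r" "\<And>c1 c2. bent r (lincomb a h1 h2 c1 c2)" "bent m g1" "bent m g2"
    and u: "u \<in> vecs r" and v: "v \<in> vecs m"
  shows "three_valued (r + m) (walsh (r + m) (frakf r a h1 h2 g1 g2) (u @ v))"
proof -
  define R :: int where "R = 2 ^ (r div 2)"
  define M :: int where "M = 2 ^ (m div 2)"
  have L: "walsh r (lincomb a h1 h2 c1 c2) u \<in> {R, - R}" for c1 c2
    unfolding R_def using bent_walsh_values[OF assms(2) u] .
  have "walsh r a u + walsh r (lincomb a h1 h2 False True) u \<in> {0, 2 * R, - (2 * R)}"
    using L[of False False] L[of False True] by auto
  moreover have "walsh r (lincomb a h1 h2 True False) u - walsh r (lincomb a h1 h2 True True) u
      \<in> {0, 2 * R, - (2 * R)}"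
    using L[of True False] L[of True True] by auto
  moreover have "walsh m g1 v \<in> {M, - M}" "walsh m g2 v \<in> {M, - M}"
    unfolding M_def using bent_walsh_values v assms(3,4) by blast+
  ultimately show ?thesis
    using \<open>even r\<close> R_def M_def
    by (intro three_valued_add half_sum_products_values[OF _ _ _ _ walsh_frakf_decomposition[OF u]])
qed

lemma walsh_frakf_three_valued_plateaued:
  assumes "even r" "plateaued r 4 a"
    and "\<And>c1 c2. (c1, c2) \<noteq> (False, False) \<Longrightarrow> plateaued r 2 (lincomb a h1 h2 c1 c2)"
    and disjoint: "\<And>c1 c2 d1 d2. (c1, c2) \<noteq> (d1, d2) \<Longrightarrow>
       walsh_support r (lincomb a h1 h2 c1 c2) \<inter> walsh_support r (lincomb a h1 h2 d1 d2) = {}"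
    and "bent m g1" "bent m g2" and u: "u \<in> vecs r" and v: "v \<in> vecs m"
  shows "three_valued (r + m) (walsh (r + m) (frakf r a h1 h2 g1 g2) (u @ v))"
proof -
  define R :: int where "R = 2 ^ (r div 2)"
  define M :: int where "M = 2 ^ (m div 2)"
  let ?W = "\<lambda>c1 c2. walsh r (lincomb a h1 h2 c1 c2) u"
  have W00: "?W False False \<in> {0, 4 * R, - (4 * R)}"
    using plateaued_walsh_values[OF assms(2) u] by (simp add: R_def)
  have W2: "?W c1 c2 \<in> {0, 2 * R, - (2 * R)}" if "(c1, c2) \<noteq> (False, False)" for c1 c2
    using plateaued_walsh_values[OF assms(3)[OF that] u] by (simp add: R_def)
  have zero: "?W c1 c2 = 0 \<or> ?W d1 d2 = 0" if "(c1, c2) \<noteq> (d1, d2)" for c1 c2 d1 d2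
    using walsh_zero_if_supports_disjoint[OF disjoint[OF that] u] .
  have "walsh r a u + ?W False True \<in> {0, 2 * R, - (2 * R), 4 * R, - (4 * R)}"
    using W00 W2[of False True] zero[of False False False True] by auto
  moreover have "?W True False - ?W True True \<in> {0, 2 * R, - (2 * R), 4 * R, - (4 * R)}"
    using W2[of True False] W2[of True True] zero[of True False True True] by auto
  moreover have "walsh r a u + ?W False True = 0 \<or> ?W True False - ?W True True = 0"
    using zero[of False False True False] zero[of False False True True]
      zero[of False True True False] zero[of False True True True] by auto
  moreover have "walsh m g1 v \<in> {M, - M}" "walsh m g2 v \<in> {M, - M}"
    unfolding M_def using bent_walsh_values v assms(5,6) by blast+
  ultimately show ?thesis
    using \<open>even r\<close> R_def M_def
    by (intro three_valued_add
        half_sum_products_values_disjoint[OF _ _ _ _ _ walsh_frakf_decomposition[OF u]])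
qed

theorem mainTheorem9:
  fixes r m n :: nat and a h1 h2 g1 g2 :: "bool list \<Rightarrow> bool"
  assumes "even r" and "even m" and "n = r + m"
  shows "((\<forall>c1 c2. bent r (lincomb a h1 h2 c1 c2)) \<and> bent m g1 \<and> bent m g2
            \<longrightarrow> (\<forall>u\<in>vecs r. \<forall>v\<in>vecs m.
                  three_valued n (walsh n (frakf r a h1 h2 g1 g2) (u @ v))))
       \<and> (r \<ge> 6 \<and> plateaued r 4 a
            \<and> (\<forall>c1 c2. (c1, c2) \<noteq> (False, False) \<longrightarrow> plateaued r 2 (lincomb a h1 h2 c1 c2))
            \<and> (\<forall>c1 c2 d1 d2. (c1, c2) \<noteq> (d1, d2) \<longrightarrow>
                 walsh_support r (lincomb a h1 h2 c1 c2) \<inter> walsh_support r (lincomb a h1 h2 d1 d2) = {})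
            \<and> bent m g1 \<and> bent m g2
            \<longrightarrow> (\<forall>u\<in>vecs r. \<forall>v\<in>vecs m.
                  three_valued n (walsh n (frakf r a h1 h2 g1 g2) (u @ v))))"
  unfolding \<open>n = r + m\<close>
  by (intro conjI impI ballI; elim conjE)
    ((rule walsh_frakf_three_valued_bent[OF \<open>even r\<close>]; metis),
     (rule walsh_frakf_three_valued_plateaued[OF \<open>even r\<close>]; metis))

end
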